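(* Let $Y$ be a finite totally ordered set, $P=(T_1,T_2)$ a confluent pair of reduction operators relatively to $Y$, and $k$ an integer with $\langle T_1,T_2\rangle^k=\langle T_2,T_1\rangle^k$. Let $W$ be a subspace of $\mathbb{K}Y$ and $\{i,j\}=\{1,2\}$. If $W\subset\ker(T_i)$, then $\varphi^P(\gamma_j)|_W=(T_1\vee T_2)|_W$.
   Context: For $0\neq v\in\mathbb{K}Y$, $\mathrm{lm}(v)$ is the greatest element of $Y$ in the support of $v$; write $v<w$ if $v=0$ or $\mathrm{lm}(v)<\mathrm{lm}(w)$. A reduction operator relatively to $Y$ is a linear projector $T$ of $\mathbb{K}Y$ with $T(y)=y$ or $T(y)<y$ for each $y\in Y$. For every subspace $U$ of $\mathbb{K}Y$ there is a unique reduction operator with kernel $U$, denoted $\theta_Y^{-1}(U)$; $T_1\vee T_2=\theta_Y^{-1}(\ker T_1\cap\ker T_2)$. For endomorphisms $s,t$, $\langle t,s\rangle^k$ denotes $\cdots sts$ with $k$ factors (rightmost $s$); $(T_1,T_2)$ is confluent if $\langle T_1,T_2\rangle^k=\langle T_2,T_1\rangle^k$ for some $k$. The confluence algebra $\mathcal{A}_k$ is generated by $s_1,s_2$ with relations $s_1^2=s_1$, $s_2^2=s_2$, $\langle s_1,s_2\rangle^k=\langle s_2,s_1\rangle^k$; in it $\gamma_1=(1-s_2)\sum_{i\in I}\langle s_2,s_1\rangle^i$ and $\gamma_2=(1-s_1)\sum_{i\in I}\langle s_1,s_2\rangle^i$, where $I$ is the set of odd integers between $1$ and $k-1$. $\varphi^P:\mathcal{A}_k\to\mathrm{End}(\mathbb{K}Y)$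 is the algebra morphism $s_1\mapsto T_1$, $s_2\mapsto T_2$. *)

theory Defs
  imports Main "HOL-Library.Function_Algebras"
begin

text \<open>The vector space KY with Y a finite totally ordered set (a finite linorder type 'y)
  is represented as the functions 'y => 'k (coordinates in the basis Y), 'k a field.\<close>

definition basisv :: "'y \<Rightarrow> ('y \<Rightarrow> 'k::field)" where
  "basisv y = (\<lambda>z. if z = y then 1 else 0)"

definition supp :: "('y \<Rightarrow> 'k::field) \<Rightarrow> 'y set" where
  "supp v = {y. v y \<noteq> 0}"

definition lm :: "('y::{finite,linorder} \<Rightarrow> 'k::field) \<Rightarrow> 'y" where
  "lm v = Max (supp v)"

definition vless :: "('y::{finite,linorder} \<Rightarrow> 'k::field) \<Rightarrow> ('y \<Rightarrow> 'k) \<Rightarrow> bool" where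
  "vless v w \<longleftrightarrow> v = 0 \<or> (v \<noteq> 0 \<and> w \<noteq> 0 \<and> lm v < lm w)"

definition is_linear :: "(('y \<Rightarrow> 'k::field) \<Rightarrow> ('y \<Rightarrow> 'k)) \<Rightarrow> bool" where
  "is_linear T \<longleftrightarrow> (\<forall>v w. T (v + w) = T v + T w) \<and> (\<forall>c v. T (\<lambda>y. c * v y) = (\<lambda>y. c * T v y))"

definition is_subspace :: "('y \<Rightarrow> 'k::field) set \<Rightarrow> bool" where
  "is_subspace W \<longleftrightarrow> 0 \<in> W \<and> (\<forall>v\<in>W. \<forall>w\<in>W. v + w \<in> W) \<and> (\<forall>c. \<forall>v\<in>W. (\<lambda>y. c * v y) \<in> W)"

definition kern :: "(('y \<Rightarrow> 'k::field) \<Rightarrow> ('y \<Rightarrow> 'k)) \<Rightarrow> ('y \<Rightarrow> 'k) set" where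
  "kern T = {v. T v = 0}"

definition reduction_operator :: "(('y::{finite,linorder} \<Rightarrow> 'k::field) \<Rightarrow> ('y \<Rightarrow> 'k)) \<Rightarrow> bool" where
  "reduction_operator T \<longleftrightarrow> is_linear T \<and> T \<circ> T = T \<and>
     (\<forall>y. T (basisv y) = basisv y \<or> vless (T (basisv y)) (basisv y))"

definition theta_inv :: "('y::{finite,linorder} \<Rightarrow> 'k::field) set \<Rightarrow> (('y \<Rightarrow> 'k) \<Rightarrow> ('y \<Rightarrow> 'k))" where
  "theta_inv U = (THE T. reduction_operator T \<and> kern T = U)"

definition join :: "(('y::{finite,linorder} \<Rightarrow> 'k::field) \<Rightarrow> ('y \<Rightarrow> 'k)) \<Rightarrow> (('y \<Rightarrow> 'k) \<Rightarrow> ('y \<Rightarrow> 'k)) \<Rightarrow> (('y \<Rightarrow> 'k) \<Rightarrow> ('y \<Rightarrow> 'k))" where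
  "join T1 T2 = theta_inv (kern T1 \<inter> kern T2)"

text \<open>alt t s n = <t,s>^n = ... s t s with n factors, rightmost s (n = 0: identity).\<close>
fun alt :: "('a \<Rightarrow> 'a) \<Rightarrow> ('a \<Rightarrow> 'a) \<Rightarrow> nat \<Rightarrow> ('a \<Rightarrow> 'a)" where
  "alt t s 0 = id"
| "alt t s (Suc n) = alt s t n \<circ> s"

definition confluent :: "('a \<Rightarrow> 'a) \<Rightarrow> ('a \<Rightarrow> 'a) \<Rightarrow> bool" where
  "confluent T1 T2 \<longleftrightarrow> (\<exists>k. alt T1 T2 k = alt T2 T1 k)"

definition oddI :: "nat \<Rightarrow> nat set" where
  "oddI k = {n. odd n \<and> 1 \<le> n \<and> n + 1 \<le> k}"

text \<open>Image under phi^P (s1 -> T1, s2 -> T2) of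
  gamma_1 = (1 - s2) sum_{i in I} <s2,s1>^i and gamma_2 = (1 - s1) sum_{i in I} <s1,s2>^i.\<close>
definition gamma_img :: "(('y \<Rightarrow> 'k::field) \<Rightarrow> ('y \<Rightarrow> 'k)) \<Rightarrow> (('y \<Rightarrow> 'k) \<Rightarrow> ('y \<Rightarrow> 'k)) \<Rightarrow> nat \<Rightarrow> nat \<Rightarrow> (('y \<Rightarrow> 'k) \<Rightarrow> ('y \<Rightarrow> 'k))" where
  "gamma_img T1 T2 k j =
     (if j = 1 then (\<lambda>v. let u = (\<Sum>i\<in>oddI k. alt T2 T1 i v) in u - T2 u)
      else (\<lambda>v. let u = (\<Sum>i\<in>oddI k. alt T1 T2 i v) in u - T1 u))"

end

theory Submission
  imports Defs
begin

text \<open>Let \<open>T\<^sub>i w = 0\<close> and let u be the sum of \<open>\<langle>T\<^sub>i,T\<^sub>j\<rangle>\<^sup>n w\<close> over odd n in I. Every summand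
  begins with \<open>T\<^sub>j\<close>, so \<open>T\<^sub>j u = u\<close>, while \<open>T\<^sub>j T\<^sub>i\<close> shifts the sum by two indices; telescoping,
  with confluence killing the last term, gives \<open>u - T\<^sub>j T\<^sub>i u = T\<^sub>j w\<close>. Hence the image
  \<open>u - T\<^sub>i u\<close> of w under \<open>\<gamma>\<^sub>j\<close> differs from w by an element of \<open>ker T\<^sub>1 \<inter> ker T\<^sub>2\<close>, and it is
  fixed by \<open>T\<^sub>1 \<or> T\<^sub>2\<close>: a vector fixed by a reduction operator is fixed by every reduction
  operator with smaller kernel, since the leading monomial of a nonzero kernel element is reducible.
  Most of the work is the well-definedness of \<open>\<theta>\<^sup>-\<^sup>1\<close>: a reduction operator is determined by its
  kernel, and reduction modulo U (cancelling leading monomials of U) provides one.\<close>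

lemma sum_fun_apply: "(sum f A) x = (\<Sum>a\<in>A. f a x)"
  by (induction A rule: infinite_finite_induct) auto

lemma is_linear_add: "is_linear T \<Longrightarrow> T (v + w) = T v + T w"
  unfolding is_linear_def by blast

lemma is_linear_scale: "is_linear T \<Longrightarrow> T (\<lambda>y. c * v y) = (\<lambda>y. c * T v y)"
  unfolding is_linear_def by blast

lemma is_linear_zero: "is_linear T \<Longrightarrow> T 0 = 0"
  using is_linear_add[of T 0 0] by simp

lemma is_linear_diff: "is_linear T \<Longrightarrow> T (v - w) = T v - T w"
  using is_linear_add[of T "v - w" w] by (simp add: algebra_simps)

lemma is_linear_sum: "is_linear T \<Longrightarrow> T (sum f A) = (\<Sum>a\<in>A. T (f a))"
  by (induction A rule: infinite_finite_induct) (auto simp: is_linear_zero is_linear_add)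

lemma basisv_expansion: "(x::'y::finite \<Rightarrow> 'k::field) = (\<Sum>y\<in>UNIV. (\<lambda>z. x y * basisv y z))"
proof
  fix z
  have "(\<Sum>y\<in>UNIV. x y * basisv y z) = (\<Sum>y\<in>UNIV. if z = y then x y else 0)"
    by (rule sum.cong) (auto simp: basisv_def)
  then show "x z = (\<Sum>y\<in>UNIV. (\<lambda>z. x y * basisv y z)) z"
    by (simp add: sum_fun_apply)
qed

lemma is_linear_apply_coord:
  assumes "is_linear T"
  shows "T (x::'y::finite \<Rightarrow> 'k::field) z = (\<Sum>y\<in>UNIV. x y * T (basisv y) z)"
proof -
  have "T x = T (\<Sum>y\<in>UNIV. (\<lambda>z. x y * basisv y z))"
    using basisv_expansion[of x] by simp
  also have "\<dots> = (\<Sum>y\<in>UNIV. (\<lambda>z. x y * T (basisv y) z))"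
    using assms by (simp add: is_linear_sum is_linear_scale)
  finally show ?thesis by (simp add: sum_fun_apply)
qed

lemma is_subspace_zero: "is_subspace U \<Longrightarrow> 0 \<in> U"
  unfolding is_subspace_def by blast

lemma is_subspace_add: "is_subspace U \<Longrightarrow> v \<in> U \<Longrightarrow> w \<in> U \<Longrightarrow> v + w \<in> U"
  unfolding is_subspace_def by blast

lemma is_subspace_scale: "is_subspace U \<Longrightarrow> v \<in> U \<Longrightarrow> (\<lambda>y. c * v y) \<in> U"
  unfolding is_subspace_def by blast

lemma is_subspace_diff:
  assumes "is_subspace U" "v \<in> U" "w \<in> U"
  shows "v - w \<in> U"
proof -
  have "v + (\<lambda>y. (-1) * w y) \<in> U"
    using assms by (intro is_subspace_add is_subspace_scale)
  moreover have "v + (\<lambda>y. (-1) * w y) = v - w" by (simp add: fun_eq_iff)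
  ultimately show ?thesis by simp
qed

lemma is_subspace_kern_Int:
  assumes "is_linear A" "is_linear B"
  shows "is_subspace (kern A \<inter> kern B)"
  using assms is_linear_zero[OF assms(1)] is_linear_zero[OF assms(2)]
  unfolding is_subspace_def kern_def by (auto simp: is_linear_add is_linear_scale zero_fun_def)

lemma supp_add: "supp (a + b :: 'y \<Rightarrow> 'k::field) \<subseteq> supp a \<union> supp b"
  unfolding supp_def by auto

lemma supp_diff: "supp (a - b :: 'y \<Rightarrow> 'k::field) \<subseteq> supp a \<union> supp b"
  unfolding supp_def by auto

lemma supp_scale: "supp (\<lambda>y. c * v y :: 'k::field) \<subseteq> supp v"
  unfolding supp_def by auto

lemma supp_basisv: "supp (basisv y :: 'y \<Rightarrow> 'k::field) = {y}"
  unfolding supp_def basisv_def by auto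

lemma basisv_nonzero: "(basisv y :: 'y \<Rightarrow> 'k::field) \<noteq> 0"
  unfolding basisv_def by (auto simp: fun_eq_iff)

lemma lm_in_supp: "(v::'y::{finite,linorder} \<Rightarrow> 'k::field) \<noteq> 0 \<Longrightarrow> lm v \<in> supp v"
  unfolding lm_def supp_def by (rule Max_in) (auto simp: fun_eq_iff)

lemma le_lm: "z \<in> supp (v::'y::{finite,linorder} \<Rightarrow> 'k::field) \<Longrightarrow> z \<le> lm v"
  unfolding lm_def by (rule Max_ge) auto

lemma lm_basisv: "lm (basisv y :: 'y::{finite,linorder} \<Rightarrow> 'k::field) = y"
  unfolding lm_def supp_basisv by simp

definition nf :: "(('y::{finite,linorder} \<Rightarrow> 'k::field) \<Rightarrow> ('y \<Rightarrow> 'k)) \<Rightarrow> 'y set" where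
  "nf T = {y. T (basisv y) = basisv y}"

lemma reduction_operator_is_linear: "reduction_operator T \<Longrightarrow> is_linear T"
  unfolding reduction_operator_def by blast

lemma reduction_operator_idem: "reduction_operator T \<Longrightarrow> T (T x) = T x"
  unfolding reduction_operator_def by (metis comp_apply)

lemma reduction_operator_basisv_coeff:
  assumes R: "reduction_operator T" and nz: "T (basisv y) z \<noteq> 0"
  shows "(y \<in> nf T \<and> z = y) \<or> (y \<notin> nf T \<and> z < y)"
proof (cases "y \<in> nf T")
  case True
  then show ?thesis using nz by (auto simp: nf_def basisv_def split: if_splits)
next
  case False
  then have "vless (T (basisv y)) (basisv y)"
    using R unfolding reduction_operator_def nf_def by auto
  moreover have "T (basisv y) \<noteq> 0" using nz by auto
  ultimately have "lm (T (basisv y)) < y" unfolding vless_def lm_basisv by auto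
  moreover have "z \<le> lm (T (basisv y))" using nz by (intro le_lm) (simp add: supp_def)
  ultimately show ?thesis using False by auto
qed

text \<open>Reducible basis vectors are mapped strictly below themselves, so a coordinate lying
  above every reducible element of the support is left untouched, or killed if reducible.\<close>

lemma reduction_operator_apply_coord:
  assumes R: "reduction_operator T"
    and above: "\<And>y. y \<in> supp x - nf T \<Longrightarrow> y \<le> y0"
  shows "T x y0 = (if y0 \<in> nf T then x y0 else 0)"
proof -
  have summand: "x y * T (basisv y) y0 = (if y0 \<in> nf T then (if y = y0 then x y0 else 0) else 0)"
    for y
  proof (cases "x y * T (basisv y) y0 = 0")
    case True
    then show ?thesis by (auto simp: nf_def basisv_def)
  next
    case False
    then have "x y \<noteq> 0" and coeff: "T (basisv y) y0 \<noteq> 0" by auto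
    then have "y \<notin> nf T \<Longrightarrow> y \<le> y0" using above by (simp add: supp_def)
    then have "y \<in> nf T \<and> y0 = y"
      using reduction_operator_basisv_coeff[OF R coeff] by fastforce
    then show ?thesis by (simp add: nf_def basisv_def)
  qed
  have "T x y0 = (\<Sum>y\<in>UNIV. x y * T (basisv y) y0)"
    by (rule is_linear_apply_coord[OF reduction_operator_is_linear[OF R]])
  also have "\<dots> = (\<Sum>y\<in>UNIV. if y0 \<in> nf T then (if y = y0 then x y0 else 0) else 0)"
    by (simp only: summand)
  finally show ?thesis by (cases "y0 \<in> nf T") simp_all
qed

lemma reduction_operator_lm_kern:
  assumes R: "reduction_operator T" and "T z = 0" and "z \<noteq> 0"
  shows "lm z \<notin> nf T"
proof
  assume "lm z \<in> nf T"
  moreover have "T z (lm z) = (if lm z \<in> nf T then z (lm z) else 0)"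
    by (rule reduction_operator_apply_coord[OF R]) (simp add: le_lm)
  ultimately have "T z (lm z) = z (lm z)" by simp
  then show False using assms(2,3) lm_in_supp[of z] by (simp add: supp_def)
qed

lemma reduction_operator_fixed_supp:
  assumes R: "reduction_operator T" and fixed: "T x = x"
  shows "supp x \<subseteq> nf T"
proof (rule ccontr)
  assume "\<not> supp x \<subseteq> nf T"
  then have ne: "supp x - nf T \<noteq> {}" by auto
  define y where "y = Max (supp x - nf T)"
  have y: "y \<in> supp x - nf T" unfolding y_def using ne by (intro Max_in) auto
  have "T x y = 0"
    using reduction_operator_apply_coord[OF R, of x y] y unfolding y_def by auto
  then show False using fixed y by (simp add: supp_def)
qed

lemma reduction_operators_common_kern_eq_zero:
  assumes R: "reduction_operator T" and R': "reduction_operator T'"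
    and "T z = 0" and "T' z = 0" and "supp z \<subseteq> nf T \<union> nf T'"
  shows "z = 0"
proof (rule ccontr)
  assume "z \<noteq> 0"
  then have "lm z \<notin> nf T \<union> nf T'" and "lm z \<in> supp z"
    using assms(3,4) reduction_operator_lm_kern[OF R] reduction_operator_lm_kern[OF R'] lm_in_supp
    by auto
  then show False using assms(5) by blast
qed

lemma reduction_operator_fixed_transfer:
  assumes T: "reduction_operator T" and R: "reduction_operator R"
    and ker: "kern R \<subseteq> kern T" and fixed: "T x = x"
  shows "R x = x"
proof -
  let ?z = "x - R x"
  have Rz: "R ?z = 0"
    using is_linear_diff[OF reduction_operator_is_linear[OF R]] reduction_operator_idem[OF R] by simp
  then have Tz: "T ?z = 0" using ker by (auto simp: kern_def)
  have "supp x \<subseteq> nf T" and "supp (R x) \<subseteq> nf R"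
    using reduction_operator_fixed_supp[OF T fixed]
      reduction_operator_fixed_supp[OF R reduction_operator_idem[OF R, of x]] by simp_all
  then have "supp ?z \<subseteq> nf T \<union> nf R" using supp_diff[of x "R x"] by blast
  then have "?z = 0" using reduction_operators_common_kern_eq_zero[OF T R Tz Rz] by blast
  then show ?thesis by simp
qed

lemma reduction_operator_unique:
  assumes T: "reduction_operator T" and T': "reduction_operator T'" and ker: "kern T = kern T'"
  shows "T = T'"
proof
  fix w
  have "T' (T w) = T w"
    using reduction_operator_fixed_transfer[OF T T'] ker reduction_operator_idem[OF T] by simp
  moreover have "T' (w - T w) = 0"
    using ker is_linear_diff[OF reduction_operator_is_linear[OF T]] reduction_operator_idem[OF T]
    by (auto simp: kern_def)
  ultimately show "T w = T' w"
    using is_linear_diff[OF reduction_operator_is_linear[OF T'], of w "T w"] by simp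
qed

definition lead_monomials :: "('y::{finite,linorder} \<Rightarrow> 'k::field) set \<Rightarrow> 'y set" where
  "lead_monomials U = lm ` (U - {0})"

text \<open>Division by U: repeatedly cancel the greatest leading monomial in the support. The measure
  is the size of the down-set of the leading monomials occurring in the support; cancelling its top
  element y only introduces monomials below y.\<close>

lemma reduced_form_exists:
  assumes S: "is_subspace U"
  shows "\<exists>r. supp r \<inter> lead_monomials U = {} \<and> v - r \<in> U \<and> supp r \<subseteq> (\<Union>z\<in>supp v. {..z})"
proof (induction v rule: measure_induct_rule[where f = "\<lambda>v. card (\<Union>z\<in>supp v \<inter> lead_monomials U. {..z})"])
  case (less v)
  let ?L = "lead_monomials U"
  show ?case
  proof (cases "supp v \<inter> ?L = {}")
    case True
    then show ?thesis
      by (intro exI[of _ v]) (auto simp: is_subspace_zero[OF S, unfolded zero_fun_def])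
  next
    case False
    define y where "y = Max (supp v \<inter> ?L)"
    have y: "y \<in> supp v \<inter> ?L" unfolding y_def using False by (intro Max_in) auto
    have y_max: "z \<le> y" if "z \<in> supp v \<inter> ?L" for z
      unfolding y_def using that by (intro Max_ge) auto
    obtain u where u: "u \<in> U" "u \<noteq> 0" "lm u = y"
      using y unfolding lead_monomials_def by auto
    have uy: "u y \<noteq> 0" using lm_in_supp[OF u(2)] u(3) by (simp add: supp_def)
    have u_below: "z \<le> y" if "z \<in> supp u" for z using le_lm[OF that] u(3) by simp
    define v' where "v' = v - (\<lambda>z. v y / u y * u z)"
    have v'y: "v' y = 0" unfolding v'_def using uy by simp
    have supp_v': "supp v' \<subseteq> supp v \<union> supp u" unfolding v'_def supp_def by auto
    have "supp v' \<inter> ?L \<subseteq> {..<y}"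
    proof
      fix z assume z: "z \<in> supp v' \<inter> ?L"
      then have "z \<noteq> y" using v'y by (auto simp: supp_def)
      moreover have "z \<le> y" using z supp_v' y_max u_below by blast
      ultimately show "z \<in> {..<y}" by simp
    qed
    then have "(\<Union>z\<in>supp v' \<inter> ?L. {..z}) \<subseteq> {..<y}" by auto
    moreover have "{..<y} \<subset> (\<Union>z\<in>supp v \<inter> ?L. {..z})" using y by auto
    ultimately have "card (\<Union>z\<in>supp v' \<inter> ?L. {..z}) < card (\<Union>z\<in>supp v \<inter> ?L. {..z})"
      by (rule le_less_trans[OF card_mono[OF finite] psubset_card_mono[OF finite]])
    then obtain r where r: "supp r \<inter> ?L = {}" "v' - r \<in> U" "supp r \<subseteq> (\<Union>z\<in>supp v'. {..z})"
      using less.IH by blast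
    have "v - r = (v' - r) + (\<lambda>z. v y / u y * u z)" unfolding v'_def by simp
    also have "\<dots> \<in> U" using S r(2) u(1) by (intro is_subspace_add is_subspace_scale)
    finally have "v - r \<in> U" .
    moreover have "supp r \<subseteq> (\<Union>z\<in>supp v. {..z})"
    proof
      fix x assume "x \<in> supp r"
      then obtain z where z: "z \<in> supp v'" "x \<le> z" using r(3) by auto
      then consider "z \<in> supp v" | "z \<in> supp u" using supp_v' by blast
      then show "x \<in> (\<Union>z\<in>supp v. {..z})"
      proof cases
        case 1
        then show ?thesis using z(2) by auto
      next
        case 2
        then have "x \<le> y" using z(2) u_below order_trans by blast
        then show ?thesis using y by auto
      qed
    qed
    ultimately show ?thesis using r(1) by blast
  qed
qed

definition reduce_mod :: "('y::{finite,linorder} \<Rightarrow> 'k::field) set \<Rightarrow> ('y \<Rightarrow> 'k) \<Rightarrow> ('y \<Rightarrow> 'k)" where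
  "reduce_mod U v =
     (SOME r. supp r \<inter> lead_monomials U = {} \<and> v - r \<in> U \<and> supp r \<subseteq> (\<Union>z\<in>supp v. {..z}))"

lemma reduce_mod:
  assumes "is_subspace U"
  shows "supp (reduce_mod U v) \<inter> lead_monomials U = {}"
    and "v - reduce_mod U v \<in> U"
    and "supp (reduce_mod U v) \<subseteq> (\<Union>z\<in>supp v. {..z})"
  using someI_ex[OF reduced_form_exists[OF assms, of v]] unfolding reduce_mod_def by blast+

lemma reduced_form_unique:
  assumes "supp r \<inter> lead_monomials U = {}" and "supp r' \<inter> lead_monomials U = {}"
    and "r - r' \<in> U"
  shows "r = r'"
proof (rule ccontr)
  assume "r \<noteq> r'"
  then have "lm (r - r') \<in> lead_monomials U" and "lm (r - r') \<in> supp r \<union> supp r'"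
    using assms(3) lm_in_supp[of "r - r'"] supp_diff[of r r'] unfolding lead_monomials_def by auto
  then show False using assms(1,2) by blast
qed

lemma reduce_mod_eqI:
  assumes S: "is_subspace U" and "supp r \<inter> lead_monomials U = {}" and "v - r \<in> U"
  shows "reduce_mod U v = r"
proof (rule reduced_form_unique)
  show "supp (reduce_mod U v) \<inter> lead_monomials U = {}" by (rule reduce_mod(1)[OF S])
  show "supp r \<inter> lead_monomials U = {}" by fact
  have "reduce_mod U v - r = (v - r) - (v - reduce_mod U v)" by simp
  also have "\<dots> \<in> U" using S assms(3) reduce_mod(2)[OF S] by (rule is_subspace_diff)
  finally show "reduce_mod U v - r \<in> U" .
qed

lemma is_linear_reduce_mod:
  assumes S: "is_subspace U"
  shows "is_linear (reduce_mod U)"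
  unfolding is_linear_def
proof (intro conjI allI)
  fix v w
  show "reduce_mod U (v + w) = reduce_mod U v + reduce_mod U w"
  proof (rule reduce_mod_eqI[OF S])
    show "supp (reduce_mod U v + reduce_mod U w) \<inter> lead_monomials U = {}"
      using supp_add[of "reduce_mod U v" "reduce_mod U w"] reduce_mod(1)[OF S] by blast
    have "v + w - (reduce_mod U v + reduce_mod U w) = (v - reduce_mod U v) + (w - reduce_mod U w)"
      by simp
    also have "\<dots> \<in> U" by (rule is_subspace_add[OF S reduce_mod(2)[OF S] reduce_mod(2)[OF S]])
    finally show "v + w - (reduce_mod U v + reduce_mod U w) \<in> U" .
  qed
next
  fix c v
  show "reduce_mod U (\<lambda>y. c * v y) = (\<lambda>y. c * reduce_mod U v y)"
  proof (rule reduce_mod_eqI[OF S])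
    show "supp (\<lambda>y. c * reduce_mod U v y) \<inter> lead_monomials U = {}"
      using supp_scale[of c "reduce_mod U v"] reduce_mod(1)[OF S] by blast
    have "(\<lambda>y. c * v y) - (\<lambda>y. c * reduce_mod U v y) = (\<lambda>y. c * (v - reduce_mod U v) y)"
      by (simp add: fun_eq_iff algebra_simps)
    also have "\<dots> \<in> U" by (rule is_subspace_scale[OF S reduce_mod(2)[OF S]])
    finally show "(\<lambda>y. c * v y) - (\<lambda>y. c * reduce_mod U v y) \<in> U" .
  qed
qed

lemma reduce_mod_idem: "is_subspace U \<Longrightarrow> reduce_mod U (reduce_mod U v) = reduce_mod U v"
  by (rule reduce_mod_eqI) (simp_all add: reduce_mod(1) is_subspace_zero)

lemma reduce_mod_basisv:
  assumes S: "is_subspace U"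
  shows "reduce_mod U (basisv y) = basisv y \<or> vless (reduce_mod U (basisv y)) (basisv y)"
proof (cases "y \<in> lead_monomials U")
  case False
  then have "reduce_mod U (basisv y) = basisv y"
    by (intro reduce_mod_eqI[OF S]) (simp_all add: supp_basisv is_subspace_zero[OF S])
  then show ?thesis ..
next
  case True
  let ?r = "reduce_mod U (basisv y)"
  have "supp ?r \<subseteq> {..y}" and "y \<notin> supp ?r"
    using reduce_mod(1,3)[OF S, of "basisv y"] True by (auto simp: supp_basisv)
  then have "lm ?r < y" if "?r \<noteq> 0" using lm_in_supp[OF that] by (force intro: le_neq_trans)
  then have "vless ?r (basisv y)" by (auto simp: vless_def lm_basisv basisv_nonzero)
  then show ?thesis ..
qed

lemma kern_reduce_mod:
  assumes S: "is_subspace U"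
  shows "kern (reduce_mod U) = U"
proof
  show "kern (reduce_mod U) \<subseteq> U"
  proof
    fix v assume "v \<in> kern (reduce_mod U)"
    then show "v \<in> U" using reduce_mod(2)[OF S, of v] by (simp add: kern_def)
  qed
  show "U \<subseteq> kern (reduce_mod U)"
    by (auto simp: kern_def supp_def intro: reduce_mod_eqI[OF S])
qed

lemma reduction_operator_reduce_mod:
  "is_subspace U \<Longrightarrow> reduction_operator (reduce_mod U)"
  unfolding reduction_operator_def
  by (simp add: is_linear_reduce_mod reduce_mod_idem reduce_mod_basisv comp_def)

lemma
  assumes "is_subspace U"
  shows reduction_operator_theta_inv: "reduction_operator (theta_inv U)"
    and kern_theta_inv: "kern (theta_inv U) = U"
proof -
  have "\<exists>!T. reduction_operator T \<and> kern T = U"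
    using assms reduction_operator_reduce_mod kern_reduce_mod reduction_operator_unique by metis
  then have "reduction_operator (theta_inv U) \<and> kern (theta_inv U) = U"
    unfolding theta_inv_def by (rule theI')
  then show "reduction_operator (theta_inv U)" and "kern (theta_inv U) = U" by simp_all
qed

lemma join_eqI:
  fixes A B :: "('y::{finite,linorder} \<Rightarrow> 'k::field) \<Rightarrow> ('y \<Rightarrow> 'k)"
  assumes RA: "reduction_operator A" and RB: "reduction_operator B"
    and "B x = x" and "A y = y" and "A (x - y - w) = 0" and "B (x - y - w) = 0"
  shows "join A B w = x - y"
proof -
  let ?R = "join A B"
  have "is_subspace (kern A \<inter> kern B)"
    using RA RB by (intro is_subspace_kern_Int reduction_operator_is_linear)
  then have R: "reduction_operator ?R" and ker: "kern ?R = kern A \<inter> kern B"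
    unfolding join_def by (simp_all add: reduction_operator_theta_inv kern_theta_inv)
  have "?R x = x" using reduction_operator_fixed_transfer[OF RB R] ker assms(3) by auto
  moreover have "?R y = y" using reduction_operator_fixed_transfer[OF RA R] ker assms(4) by auto
  moreover have "?R (x - y - w) = 0" using ker assms(5,6) by (auto simp: kern_def)
  ultimately show ?thesis
    by (simp add: is_linear_diff[OF reduction_operator_is_linear[OF R]])
qed

lemma alt_Suc_left: "alt t s (Suc n) = (if even n then s else t) \<circ> alt t s n"
proof (induction n arbitrary: t s)
  case 0
  then show ?case by simp
next
  case (Suc n)
  have "alt t s (Suc (Suc n)) = alt s t (Suc n) \<circ> s" by (simp only: alt.simps(2))
  also have "\<dots> = ((if even n then t else s) \<circ> alt s t n) \<circ> s" by (simp only: Suc.IH[of s t])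
  also have "\<dots> = (if even (Suc n) then s else t) \<circ> alt t s (Suc n)" by (simp add: comp_assoc)
  finally show ?case .
qed

lemma alt_apply_zero: "A 0 = 0 \<Longrightarrow> B 0 = 0 \<Longrightarrow> alt A B n 0 = 0"
  by (induction n arbitrary: A B) auto

lemma alt_apply_eq_zero_mono:
  assumes "A 0 = 0" and "B 0 = 0" and "n \<le> m" and "alt A B n w = 0"
  shows "alt A B m w = 0"
  using assms(3,4) by (induction m rule: dec_induct) (simp_all add: alt_Suc_left assms(1,2) del: alt.simps(2))

lemma alt_confluent_apply_kern:
  assumes "A 0 = 0" and "B 0 = 0" and "alt A B k = alt B A k" and "k \<ge> 1" and "A w = 0"
  shows "alt A B k w = 0"
proof -
  obtain n where "k = Suc n" using assms(4) by (cases k) auto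
  then show ?thesis using assms by (simp add: alt_apply_zero)
qed

lemma oddI_eq_image: "oddI k = (\<lambda>m. 2 * m + 1) ` {..<k div 2}"
proof (rule set_eqI)
  fix n
  show "n \<in> oddI k \<longleftrightarrow> n \<in> (\<lambda>m. 2 * m + 1) ` {..<k div 2}"
  proof
    assume "n \<in> oddI k"
    then have "odd n" and "n + 1 \<le> k" by (auto simp: oddI_def)
    then obtain m where n: "n = 2 * m + 1" by (elim oddE) simp
    moreover from n \<open>n + 1 \<le> k\<close> have "m < k div 2" by linarith
    ultimately show "n \<in> (\<lambda>m. 2 * m + 1) ` {..<k div 2}" by auto
  qed (auto simp: oddI_def)
qed

lemma odd_alt_sum_telescope:
  fixes A B :: "('y \<Rightarrow> 'k::field) \<Rightarrow> ('y \<Rightarrow> 'k)" and k :: nat and w :: "'y \<Rightarrow> 'k"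
  assumes LA: "is_linear A" and LB: "is_linear B"
  defines "u \<equiv> \<Sum>i\<in>oddI k. alt A B i w"
  shows "u - B (A u) = alt A B 1 w - alt A B (2 * (k div 2) + 1) w"
proof -
  define a where "a m = alt A B (2 * m + 1) w" for m
  have u: "u = (\<Sum>m<k div 2. a m)"
    unfolding u_def oddI_eq_image a_def by (subst sum.reindex) (auto simp: inj_on_def)
  have "B (A (a m)) = a (Suc m)" for m
    unfolding a_def by (simp add: alt_Suc_left del: alt.simps(2))
  then have "B (A u) = (\<Sum>m<k div 2. a (Suc m))"
    unfolding u by (simp add: is_linear_sum[OF LA] is_linear_sum[OF LB])
  then have "u - B (A u) = (\<Sum>m<k div 2. a m - a (Suc m))"
    unfolding u by (simp add: sum_subtractf)
  also have "\<dots> = a 0 - a (k div 2)" by (rule sum_lessThan_telescope')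
  finally show ?thesis unfolding a_def by simp
qed

lemma odd_alt_sum_eq_join:
  fixes A B :: "('y::{finite,linorder} \<Rightarrow> 'k::field) \<Rightarrow> ('y \<Rightarrow> 'k)"
  assumes RA: "reduction_operator A" and RB: "reduction_operator B"
    and "k \<ge> 1" and conf: "alt A B k = alt B A k" and Aw: "A w = 0"
  shows "(let u = \<Sum>i\<in>oddI k. alt A B i w in u - A u) = join A B w"
proof -
  define u where "u = (\<Sum>i\<in>oddI k. alt A B i w)"
  have LA: "is_linear A" and LB: "is_linear B"
    using RA RB by (simp_all add: reduction_operator_is_linear)
  have A0: "A 0 = 0" and B0: "B 0 = 0" by (rule is_linear_zero[OF LA], rule is_linear_zero[OF LB])
  have "B (alt A B i w) = alt A B i w" if "i \<in> oddI k" for i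
    using that reduction_operator_idem[OF RB] by (auto simp: oddI_def alt_Suc_left simp del: alt.simps(2) elim!: oddE)
  then have Bu: "B u = u" unfolding u_def by (simp add: is_linear_sum[OF LB])
  have "alt A B (2 * (k div 2) + 1) w = 0"
    by (rule alt_apply_eq_zero_mono[of A B k, OF A0 B0 _
          alt_confluent_apply_kern[OF A0 B0 conf \<open>k \<ge> 1\<close> Aw]]) simp
  then have "u - B (A u) = B w" using odd_alt_sum_telescope[OF LA LB, where k = k and w = w] by (simp add: u_def)
  then have "B (u - A u - w) = 0" using Bu by (simp add: is_linear_diff[OF LB])
  moreover have "A (u - A u - w) = 0"
    using Aw by (simp add: is_linear_diff[OF LA] reduction_operator_idem[OF RA])
  ultimately have "join A B w = u - A u"
    by (intro join_eqI[OF RA RB Bu reduction_operator_idem[OF RA, of u]])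
  then show ?thesis by (simp add: u_def Let_def)
qed

theorem lemma3p2p8:
  fixes T1 T2 :: "('y::{finite,linorder} \<Rightarrow> 'k::field) \<Rightarrow> ('y \<Rightarrow> 'k)"
    and k :: nat and W :: "('y \<Rightarrow> 'k) set" and i j :: nat
  assumes "reduction_operator T1" and "reduction_operator T2"
    and "confluent T1 T2"
    and "k \<ge> 1" and "alt T1 T2 k = alt T2 T1 k"
    and "is_subspace W"
    and "{i, j} = {1, 2}"
    and "W \<subseteq> kern (if i = 1 then T1 else T2)"
  shows "\<forall>w\<in>W. gamma_img T1 T2 k j w = join T1 T2 w"
proof
  fix w assume "w \<in> W"
  from \<open>{i, j} = {1, 2}\<close> consider "i = 1" "j = 2" | "i = 2" "j = 1"
    by (auto simp: doubleton_eq_iff)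
  then show "gamma_img T1 T2 k j w = join T1 T2 w"
  proof cases
    case 1
    then have "T1 w = 0" using assms(8) \<open>w \<in> W\<close> by (auto simp: kern_def)
    with 1 show ?thesis
      using odd_alt_sum_eq_join[OF assms(1,2,4,5)] by (simp add: gamma_img_def)
  next
    case 2
    then have "T2 w = 0" using assms(8) \<open>w \<in> W\<close> by (auto simp: kern_def)
    with 2 show ?thesis
      using odd_alt_sum_eq_join[OF assms(2,1,4) assms(5)[symmetric]]
      by (simp add: gamma_img_def join_def Int_commute)
  qed
qed

end
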